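(* Let $\mathcal N$ be an occurrence net and $x$ a place of $\mathcal N$. Then the last known cut $\mathit{LKC}(x)=\{p\in\mathcal P\mid p\not<x\ \text{and}\ t<x\text{ for all }t\in{}^\bullet p\}$ is a cut of $\mathcal N$.
   Context: A Petri net $(\mathcal P,\mathcal T,\mathcal F,\mathit{In})$ has disjoint places $\mathcal P$ and transitions $\mathcal T$, a flow relation $\mathcal F$ that is a multiset over $(\mathcal P\times\mathcal T)\cup(\mathcal T\times\mathcal P)$, and a finite multiset $\mathit{In}$ over $\mathcal P$; ${}^\bullet x(y)=\mathcal F(y,x)$, $x^\bullet(y)=\mathcal F(x,y)$, and every transition has finite nonempty pre- and postcondition. Let $<$ be the transitive closure of $\{(x,y)\mid\mathcal F(x,y)>0\}$ and $\le$ its reflexive-transitive closure. Nodes $x,y$ are in conflict if there is a place $p\ne x,y$ and distinct transitions $t_1,t_2\in p^\bullet$ with $t_1\le x$ and $t_2\le y$; they are concurrent if neither $x\le y$ nor $y\le x$ nor in conflict. An occurrence net is a Petri net in which pre- and postconditions of transitions are sets, every place has at most one incoming transition, $\mathit{In}=\{p\mid{}^\bullet p=\emptyset\}$, $\mathcal F^{-1}$ is well-founded, and no transition is in conflict with itself. A cut is a maximal set of pairwise concurrent places. *)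

theory Defs
  imports Main
begin

text \<open>A Petri net is given by a place set P, a transition set T (nodes of a common
type 'a), a flow multiset F (a function from pairs of nodes to nat) and an
initial multiset In over places (a function to nat).\<close>

definition preset :: "('a \<times> 'a \<Rightarrow> nat) \<Rightarrow> 'a \<Rightarrow> 'a set" where
  "preset F x = {y. F (y, x) > 0}"

definition postset :: "('a \<times> 'a \<Rightarrow> nat) \<Rightarrow> 'a \<Rightarrow> 'a set" where
  "postset F x = {y. F (x, y) > 0}"

definition petri_net :: "'a set \<Rightarrow> 'a set \<Rightarrow> ('a \<times> 'a \<Rightarrow> nat) \<Rightarrow> ('a \<Rightarrow> nat) \<Rightarrow> bool" where
  "petri_net P T F In \<longleftrightarrow>
     P \<inter> T = {} \<and>
     (\<forall>x y. F (x, y) > 0 \<longrightarrow> (x \<in> P \<and> y \<in> T) \<or> (x \<in> T \<and> y \<in> P)) \<and>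
     finite {p. In p > 0} \<and> (\<forall>p. In p > 0 \<longrightarrow> p \<in> P) \<and>
     (\<forall>t\<in>T. finite (preset F t) \<and> preset F t \<noteq> {} \<and>
              finite (postset F t) \<and> postset F t \<noteq> {})"

definition flow_rel :: "('a \<times> 'a \<Rightarrow> nat) \<Rightarrow> ('a \<times> 'a) set" where
  "flow_rel F = {(x, y). F (x, y) > 0}"

definition causal_less :: "('a \<times> 'a \<Rightarrow> nat) \<Rightarrow> 'a \<Rightarrow> 'a \<Rightarrow> bool" where
  "causal_less F x y \<longleftrightarrow> (x, y) \<in> (flow_rel F)\<^sup>+"

definition causal_le :: "('a \<times> 'a \<Rightarrow> nat) \<Rightarrow> 'a \<Rightarrow> 'a \<Rightarrow> bool" where
  "causal_le F x y \<longleftrightarrow> (x, y) \<in> (flow_rel F)\<^sup>*"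

definition in_conflict :: "'a set \<Rightarrow> ('a \<times> 'a \<Rightarrow> nat) \<Rightarrow> 'a \<Rightarrow> 'a \<Rightarrow> bool" where
  "in_conflict P F x y \<longleftrightarrow>
     (\<exists>p\<in>P. p \<noteq> x \<and> p \<noteq> y \<and>
        (\<exists>t1 t2. t1 \<in> postset F p \<and> t2 \<in> postset F p \<and> t1 \<noteq> t2 \<and>
                 causal_le F t1 x \<and> causal_le F t2 y))"

definition concurrent :: "'a set \<Rightarrow> ('a \<times> 'a \<Rightarrow> nat) \<Rightarrow> 'a \<Rightarrow> 'a \<Rightarrow> bool" where
  "concurrent P F x y \<longleftrightarrow>
     \<not> causal_le F x y \<and> \<not> causal_le F y x \<and> \<not> in_conflict P F x y"

definition occurrence_net :: "'a set \<Rightarrow> 'a set \<Rightarrow> ('a \<times> 'a \<Rightarrow> nat) \<Rightarrow> ('a \<Rightarrow> nat) \<Rightarrow> bool" where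
  "occurrence_net P T F In \<longleftrightarrow>
     petri_net P T F In \<and>
     (\<forall>t\<in>T. \<forall>p. F (p, t) \<le> 1 \<and> F (t, p) \<le> 1) \<and>
     (\<forall>p\<in>P. \<forall>t1 t2. t1 \<in> preset F p \<and> t2 \<in> preset F p \<longrightarrow> t1 = t2) \<and>
     (\<forall>p. In p = (if p \<in> P \<and> preset F p = {} then 1 else 0)) \<and>
     wf (flow_rel F) \<and>
     (\<forall>t\<in>T. \<not> in_conflict P F t t)"

definition pw_concurrent :: "'a set \<Rightarrow> ('a \<times> 'a \<Rightarrow> nat) \<Rightarrow> 'a set \<Rightarrow> bool" where
  "pw_concurrent P F S \<longleftrightarrow> S \<subseteq> P \<and> (\<forall>x\<in>S. \<forall>y\<in>S. x \<noteq> y \<longrightarrow> concurrent P F x y)"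

definition is_cut :: "'a set \<Rightarrow> ('a \<times> 'a \<Rightarrow> nat) \<Rightarrow> 'a set \<Rightarrow> bool" where
  "is_cut P F S \<longleftrightarrow> pw_concurrent P F S \<and>
     (\<forall>S'. S \<subseteq> S' \<and> pw_concurrent P F S' \<longrightarrow> S' = S)"

definition LKC :: "'a set \<Rightarrow> ('a \<times> 'a \<Rightarrow> nat) \<Rightarrow> 'a \<Rightarrow> 'a set" where
  "LKC P F x = {p \<in> P. \<not> causal_less F p x \<and> (\<forall>t \<in> preset F p. causal_less F t x)}"

end

theory Submission
  imports Defs
begin

text \<open>Places of LKC(x) are pairwise concurrent: any predecessor of one of them precedes x,
so a common conflict would put the unique transition producing x in conflict with itself.
The cut is maximal because every place q not below x is either above some place of LKC(x)
or in conflict with x: walking backwards from q along transitions not below x, one either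
reaches LKC(x) or meets a place whose other output transition leads to x.\<close>

lemma preset_iff_flow_rel: "a \<in> preset F b \<longleftrightarrow> (a, b) \<in> flow_rel F"
  by (simp add: preset_def flow_rel_def)

lemma postset_iff_flow_rel: "a \<in> postset F b \<longleftrightarrow> (b, a) \<in> flow_rel F"
  by (simp add: postset_def flow_rel_def)

lemma petri_netD:
  assumes "petri_net P T F In"
  shows "P \<inter> T = {}"
    and "(a, b) \<in> flow_rel F \<Longrightarrow> a \<in> P \<and> b \<in> T \<or> a \<in> T \<and> b \<in> P"
    and "t \<in> T \<Longrightarrow> preset F t \<noteq> {}"
  using assms by (auto simp: petri_net_def flow_rel_def)

lemma occurrence_netD:
  assumes "occurrence_net P T F In"
  shows "petri_net P T F In"
    and "wf (flow_rel F)"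
    and "p \<in> P \<Longrightarrow> t1 \<in> preset F p \<Longrightarrow> t2 \<in> preset F p \<Longrightarrow> t1 = t2"
    and "t \<in> T \<Longrightarrow> \<not> in_conflict P F t t"
  using assms unfolding occurrence_net_def by blast+

lemma causal_less_irrefl:
  assumes "wf (flow_rel F)"
  shows "\<not> causal_less F a a"
  using wf_acyclic[OF assms] by (simp add: causal_less_def acyclic_def)

lemma causal_le_neq_imp_less: "causal_le F a b \<Longrightarrow> a \<noteq> b \<Longrightarrow> causal_less F a b"
  by (simp add: causal_le_def causal_less_def rtrancl_eq_or_trancl)

lemma causal_less_imp_le: "causal_less F a b \<Longrightarrow> causal_le F a b"
  by (simp add: causal_le_def causal_less_def trancl_into_rtrancl)

lemma flow_rel_le_less_trans:
  "(a, b) \<in> flow_rel F \<Longrightarrow> causal_le F b c \<Longrightarrow> causal_less F a c"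
  by (simp add: causal_le_def causal_less_def rtrancl_into_trancl2)

lemma causal_le_trans: "causal_le F a b \<Longrightarrow> causal_le F b c \<Longrightarrow> causal_le F a c"
  by (simp add: causal_le_def)

lemma causal_less_last_step:
  "causal_less F a c \<Longrightarrow> \<exists>b. causal_le F a b \<and> (b, c) \<in> flow_rel F"
  unfolding causal_less_def causal_le_def by (blast dest: tranclD2)

lemma causal_less_first_step:
  "causal_less F a c \<Longrightarrow> \<exists>b. (a, b) \<in> flow_rel F \<and> causal_le F b c"
  unfolding causal_less_def causal_le_def by (blast dest: tranclD)

text \<open>In a well-founded net the condition that the branching place differs from both
nodes is automatic.\<close>

lemma in_conflictI:
  assumes "wf (flow_rel F)" and "r \<in> P"
    and "t1 \<in> postset F r" "t2 \<in> postset F r" "t1 \<noteq> t2"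
    and "causal_le F t1 a" "causal_le F t2 b"
  shows "in_conflict P F a b"
proof -
  have "causal_less F r a" "causal_less F r b"
    using assms(3-7) by (auto simp: postset_iff_flow_rel intro: flow_rel_le_less_trans)
  then have "r \<noteq> a" "r \<noteq> b"
    using causal_less_irrefl[OF assms(1)] by auto
  then show ?thesis
    using assms(2-7) by (auto simp: in_conflict_def)
qed

lemma in_conflict_causal_le_left:
  assumes wf: "wf (flow_rel F)" and "in_conflict P F a b" and "causal_le F a a'"
  shows "in_conflict P F a' b"
proof -
  obtain r t1 t2 where "r \<in> P" "t1 \<in> postset F r" "t2 \<in> postset F r" "t1 \<noteq> t2"
    and "causal_le F t1 a" "causal_le F t2 b"
    using assms(2) by (auto simp: in_conflict_def)
  with in_conflictI[OF wf] causal_le_trans[OF _ assms(3)] show ?thesis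
    by blast
qed

lemma causal_less_LKC:
  assumes "b \<in> LKC P F x" and "causal_less F a b"
  shows "causal_less F a x"
proof -
  obtain c where "causal_le F a c" and cb: "(c, b) \<in> flow_rel F"
    using causal_less_last_step[OF assms(2)] by blast
  moreover have "causal_less F c x"
    using assms(1) cb by (simp add: LKC_def preset_iff_flow_rel)
  ultimately show ?thesis
    by (simp add: causal_le_def causal_less_def rtrancl_trancl_trancl)
qed

lemma self_in_LKC:
  assumes "wf (flow_rel F)" and "x \<in> P"
  shows "x \<in> LKC P F x"
  using assms causal_less_irrefl[of F x]
  by (simp add: LKC_def preset_iff_flow_rel causal_less_def r_into_trancl)

lemma LKC_not_causal_le:
  assumes "p \<in> LKC P F x" "q \<in> LKC P F x" "p \<noteq> q"
  shows "\<not> causal_le F p q"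
proof
  assume "causal_le F p q"
  then have "causal_less F p x"
    using causal_less_LKC[OF assms(2) causal_le_neq_imp_less] assms(3) by blast
  with assms(1) show False
    by (simp add: LKC_def)
qed

lemma LKC_not_in_conflict:
  assumes net: "occurrence_net P T F In" and "x \<in> P"
    and p: "p \<in> LKC P F x" and q: "q \<in> LKC P F x"
  shows "\<not> in_conflict P F p q"
proof
  note pn = occurrence_netD(1)[OF net] and wf = occurrence_netD(2)[OF net]
  note disj = petri_netD(1)[OF pn] and typed = petri_netD(2)[OF pn]
  assume "in_conflict P F p q"
  then obtain r t1 t2 where r: "r \<in> P" "t1 \<in> postset F r" "t2 \<in> postset F r" "t1 \<noteq> t2"
    and t1p: "causal_le F t1 p" and t2q: "causal_le F t2 q"
    unfolding in_conflict_def by blast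
  have "t1 \<in> T" "t2 \<in> T"
    using r typed disj unfolding postset_iff_flow_rel by blast+
  moreover have "p \<in> P" "q \<in> P"
    using p q unfolding LKC_def by blast+
  ultimately have "t1 \<noteq> p" "t2 \<noteq> q"
    using disj by blast+
  then have "causal_less F t1 x" "causal_less F t2 x"
    using causal_less_LKC[OF p causal_le_neq_imp_less[OF t1p]]
      causal_less_LKC[OF q causal_le_neq_imp_less[OF t2q]] by auto
  then obtain c1 c2 where c1: "causal_le F t1 c1" "(c1, x) \<in> flow_rel F"
    and c2: "causal_le F t2 c2" "(c2, x) \<in> flow_rel F"
    using causal_less_last_step by meson
  \<comment> \<open>x has a single input transition\<close>
  have "c2 = c1"
    using occurrence_netD(3)[OF net \<open>x \<in> P\<close>] c1(2) c2(2)
    unfolding preset_iff_flow_rel by blast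
  have "c1 \<in> T"
    using typed[OF c1(2)] \<open>x \<in> P\<close> disj by blast
  moreover have "in_conflict P F c1 c1"
    using in_conflictI[OF wf r c1(1)] c2(1) \<open>c2 = c1\<close> by simp
  ultimately show False
    using occurrence_netD(4)[OF net] by blast
qed

lemma pw_concurrent_LKC:
  assumes "occurrence_net P T F In" and "x \<in> P"
  shows "pw_concurrent P F (LKC P F x)"
  unfolding pw_concurrent_def concurrent_def
proof (intro conjI ballI impI)
  show "LKC P F x \<subseteq> P"
    by (auto simp: LKC_def)
  fix p q
  assume p: "p \<in> LKC P F x" and q: "q \<in> LKC P F x" and "p \<noteq> q"
  then show "\<not> causal_le F p q" "\<not> causal_le F q p"
    by (simp_all add: LKC_not_causal_le)
  show "\<not> in_conflict P F p q"
    using LKC_not_in_conflict[OF assms p q] .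
qed

lemma in_conflict_if_input_below:
  assumes pn: "petri_net P T F In" and wf: "wf (flow_rel F)" and "x \<in> P" and "p \<in> P"
    and pt: "(p, t) \<in> flow_rel F" and px: "causal_less F p x"
    and tx: "\<not> causal_less F t x" and tq: "causal_le F t q"
  shows "in_conflict P F q x"
proof -
  obtain c where pc: "(p, c) \<in> flow_rel F" and cx: "causal_le F c x"
    using causal_less_first_step[OF px] by blast
  have "t \<in> T"
    using petri_netD(2)[OF pn pt] petri_netD(1)[OF pn] \<open>p \<in> P\<close> by blast
  then have "t \<noteq> x"
    using \<open>x \<in> P\<close> petri_netD(1)[OF pn] by blast
  then have "t \<noteq> c"
    using cx tx causal_le_neq_imp_less[of F t x] by auto
  moreover have "t \<in> postset F p" "c \<in> postset F p"
    using pt pc by (simp_all add: postset_iff_flow_rel)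
  ultimately show ?thesis
    using in_conflictI[OF wf \<open>p \<in> P\<close> _ _ _ tq cx] by blast
qed

lemma place_above_LKC_or_in_conflict:
  assumes net: "occurrence_net P T F In" and "x \<in> P"
  shows "q \<in> P \<Longrightarrow> \<not> causal_less F q x \<Longrightarrow>
    (\<exists>p\<in>LKC P F x. causal_le F p q) \<or> in_conflict P F q x"
proof (induction q rule: wf_induct_rule[OF wf_trancl[OF occurrence_netD(2)[OF net]]])
  case (1 q)
  note pn = occurrence_netD(1)[OF net] and wf = occurrence_netD(2)[OF net]
  note disj = petri_netD(1)[OF pn] and typed = petri_netD(2)[OF pn]
  show ?case
  proof (cases "q \<in> LKC P F x")
    case True
    then show ?thesis
      by (auto simp: causal_le_def)
  next
    case False
    then obtain t where tq: "(t, q) \<in> flow_rel F" and tx: "\<not> causal_less F t x"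
      using "1.prems" by (auto simp: LKC_def preset_iff_flow_rel)
    have "t \<in> T"
      using typed[OF tq] "1.prems"(1) disj by blast
    then obtain p where pt: "(p, t) \<in> flow_rel F"
      using petri_netD(3)[OF pn] by (auto simp: preset_def flow_rel_def)
    have "p \<in> P"
      using typed[OF pt] \<open>t \<in> T\<close> disj by blast
    have pq: "(p, q) \<in> (flow_rel F)\<^sup>+"
      using pt tq by (rule trancl_into_trancl[OF r_into_trancl])
    then have "causal_le F p q"
      by (simp add: causal_le_def trancl_into_rtrancl)
    show ?thesis
    proof (cases "causal_less F p x")
      case True
      have "causal_le F t q"
        using tq by (simp add: causal_le_def r_into_rtrancl)
      then show ?thesis
        using in_conflict_if_input_below[OF pn wf \<open>x \<in> P\<close> \<open>p \<in> P\<close> pt True tx] by blast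
    next
      case False
      with "1.IH"[OF pq \<open>p \<in> P\<close>]
      consider p' where "p' \<in> LKC P F x" "causal_le F p' p" | "in_conflict P F p x"
        by blast
      then show ?thesis
      proof cases
        case 1
        then show ?thesis
          using causal_le_trans[OF _ \<open>causal_le F p q\<close>] by blast
      next
        case 2
        then show ?thesis
          using in_conflict_causal_le_left[OF wf _ \<open>causal_le F p q\<close>] by blast
      qed
    qed
  qed
qed

lemma LKC_maximal:
  assumes "occurrence_net P T F In" and "x \<in> P"
    and "LKC P F x \<subseteq> S" and "pw_concurrent P F S"
  shows "S \<subseteq> LKC P F x"
proof
  fix q
  assume "q \<in> S"
  note wf = occurrence_netD(2)[OF assms(1)]
  have conc: "\<And>a b. a \<in> S \<Longrightarrow> b \<in> S \<Longrightarrow> a \<noteq> b \<Longrightarrow> concurrent P F a b"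
    using assms(4) by (auto simp: pw_concurrent_def)
  show "q \<in> LKC P F x"
  proof (rule ccontr)
    assume q: "q \<notin> LKC P F x"
    have "x \<in> S" "q \<noteq> x"
      using self_in_LKC[OF wf assms(2)] assms(3) q by auto
    then have qx: "concurrent P F q x"
      using conc \<open>q \<in> S\<close> by blast
    then have "\<not> causal_less F q x"
      by (auto simp: concurrent_def intro: causal_less_imp_le)
    moreover have "q \<in> P"
      using assms(4) \<open>q \<in> S\<close> by (auto simp: pw_concurrent_def)
    ultimately consider p where "p \<in> LKC P F x" "causal_le F p q" | "in_conflict P F q x"
      using place_above_LKC_or_in_conflict[OF assms(1,2)] by blast
    then show False
    proof cases
      case 1
      then show False
        using conc[of p q] q assms(3) \<open>q \<in> S\<close> by (auto simp: concurrent_def)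
    next
      case 2
      then show False
        using qx by (simp add: concurrent_def)
    qed
  qed
qed

theorem mainTheorem16:
  assumes "occurrence_net P T F In"
    and "x \<in> P"
  shows "is_cut P F (LKC P F x)"
  using pw_concurrent_LKC[OF assms] LKC_maximal[OF assms]
  by (auto simp: is_cut_def)

end
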